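(* Let $q\in\mathbb{C}[x_0,\dots,x_3]_2$ be a quadratic form of rank four. Let $l\in S_1$ and let $q_l\in T_2$ be such that $q_l(q^2)=l^2$. Then $q_l\in\langle q^{-1},p_l^2\rangle$. In particular, $\{q_l=0\}$ is tangent to $Q^{-1}$ along their intersection, i.e. along the conic section $\{p_l=q^{-1}=0\}$, where $\{p_l=0\}$ is the polar plane to $[l]$ with respect to $Q^{-1}$.
   Context: $S=\mathbb{C}[x_0,\dots,x_3]$, $T=\mathbb{C}[y_0,\dots,y_3]$; $T$ acts on $S$ and $S$ acts on $T$ by differentiation. $q^{-1}\in T_2$ is the inverse quadric: the quadric such that $S_1\to T_1$, $l\mapsto l(q^{-1})$, is inverse to $T_1\to S_1$, $g\mapsto g(q)$ (e.g. $q=x_0x_1+x_2x_3$, $q^{-1}=y_0y_1+y_2y_3$). $Q^{-1}=\{q^{-1}=0\}\subset\mathbb{P}(S_1)$ and $p_l=l(q^{-1})\in T_1$, so that $p_l(q)=l$. *)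

theory Defs
  imports "HOL-Combinatorics.Permutations" Complex_Main
begin

text \<open>Polynomials in four variables over the complex numbers, represented by their
coefficient functions: a polynomial is a map from exponent vectors
(functions nat => nat, variable index i < 4) to complex coefficients.
The same representation is used for S = C[x0..x3] and T = C[y0..y3].\<close>

type_synonym cpoly = "(nat \<Rightarrow> nat) \<Rightarrow> complex"

definition is_mono :: "(nat \<Rightarrow> nat) \<Rightarrow> bool" where
  "is_mono a \<longleftrightarrow> (\<forall>i\<ge>4. a i = 0)"

definition mdeg :: "(nat \<Rightarrow> nat) \<Rightarrow> nat" where
  "mdeg a = (\<Sum>i<4. a i)"

definition is_form :: "nat \<Rightarrow> cpoly \<Rightarrow> bool" where
  "is_form d f \<longleftrightarrow> (\<forall>a. f a \<noteq> 0 \<longrightarrow> is_mono a \<and> mdeg a = d)"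

definition pmult :: "cpoly \<Rightarrow> cpoly \<Rightarrow> cpoly" where
  "pmult f g = (\<lambda>a. \<Sum>b\<in>{b. \<forall>i. b i \<le> a i}. f b * g (\<lambda>i. a i - b i))"

definition var :: "nat \<Rightarrow> cpoly" where
  "var i = (\<lambda>a. if a = (\<lambda>j. if j = i then 1 else 0) then 1 else 0)"

text \<open>Apolarity action: g acts on f by differentiation, i.e. the monomial y^b acts
as the differential operator d^b/dx^b, so x^(c+b) maps to ((c+b)!/c!) x^c.
The action of S on T is given by the same formula.\<close>
definition act :: "cpoly \<Rightarrow> cpoly \<Rightarrow> cpoly" where
  "act g f = (\<lambda>c. \<Sum>b\<in>{b. g b \<noteq> 0}.
       g b * f (\<lambda>i. c i + b i) * (\<Prod>i<4. (fact (c i + b i) / fact (c i) :: complex)))"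

definition peval :: "cpoly \<Rightarrow> (nat \<Rightarrow> complex) \<Rightarrow> complex" where
  "peval f v = (\<Sum>a\<in>{a. f a \<noteq> 0}. f a * (\<Prod>i<4. v i ^ a i))"

text \<open>Symmetric matrix of second partial derivatives of a quadratic form (constant).\<close>
definition hess :: "cpoly \<Rightarrow> nat \<Rightarrow> nat \<Rightarrow> complex" where
  "hess q i j = act (pmult (var i) (var j)) q (\<lambda>_. 0)"

text \<open>Rank four (full rank) of a quadratic form in four variables: its 4x4 matrix
has nonzero determinant (Leibniz formula).\<close>
definition qf_rank4 :: "cpoly \<Rightarrow> bool" where
  "qf_rank4 q \<longleftrightarrow>
     (\<Sum>p | p permutes {..<4}. of_int (sign p) * (\<Prod>i<4. hess q i (p i))) \<noteq> (0::complex)"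

text \<open>r is the inverse quadric of q: l |-> l(r) (S_1 -> T_1) and g |-> g(q) (T_1 -> S_1)
are mutually inverse.\<close>
definition is_inv_quadric :: "cpoly \<Rightarrow> cpoly \<Rightarrow> bool" where
  "is_inv_quadric q r \<longleftrightarrow> is_form 2 r \<and>
     (\<forall>g. is_form 1 g \<longrightarrow> act (act g q) r = g) \<and>
     (\<forall>l. is_form 1 l \<longrightarrow> act (act l r) q = l)"

end

(*
  Let H, R, G be the Hessian matrices of q, of the inverse quadric r = q^-1 and of q_l, and L the
  coefficient vector of l. Differentiating q^2 twice by the Leibniz rule, the coefficient of x_s x_t in
  q_l(q^2) is tau H_st + 2 (H G H)_st with tau = sum_ab G_ab H_ab, while in l^2 it is 2 L_s L_t.
  As R = H^-1, conjugating by R gives G = P P^T - (tau/2) R, where P = R L is the coefficient vector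
  of p_l; that is, q_l = -(tau/2) q^-1 + (1/2) p_l^2. Along {p_l = 0} the gradient of p_l^2 vanishes,
  so there the gradient of q_l is -tau/2 times that of q^-1.
*)

theory Submission
  imports Defs "HOL-Library.Function_Algebras"
begin

section \<open>Exponent vectors\<close>

definition unit_exp :: "nat \<Rightarrow> nat \<Rightarrow> nat" where
  "unit_exp i = (\<lambda>j. if j = i then 1 else 0)"

lemma unit_exp_inject [simp]: "unit_exp i = unit_exp j \<longleftrightarrow> i = j"
  by (metis unit_exp_def zero_neq_one)

lemma unit_exp_pair_eq:
  "unit_exp i + unit_exp j = unit_exp a + unit_exp b \<longleftrightarrow> (i = a \<and> j = b) \<or> (i = b \<and> j = a)"
proof
  assume eq: "unit_exp i + unit_exp j = unit_exp a + unit_exp b"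
  have at: "unit_exp i k + unit_exp j k = unit_exp a k + unit_exp b k" for k
    using eq by (simp add: fun_eq_iff)
  show "(i = a \<and> j = b) \<or> (i = b \<and> j = a)"
    using at[of i] at[of j] at[of a] unfolding unit_exp_def
    by (cases "i = a"; cases "i = b"; cases "j = a"; cases "j = b"; simp)
qed (auto simp: add.commute)

lemma is_mono_zero: "is_mono 0"
  by (simp add: is_mono_def)

lemma is_mono_unit_exp: "i < 4 \<Longrightarrow> is_mono (unit_exp i)"
  by (simp add: is_mono_def unit_exp_def)

lemma is_mono_add: "is_mono a \<Longrightarrow> is_mono b \<Longrightarrow> is_mono (a + b)"
  by (simp add: is_mono_def)

lemma mdeg_add: "mdeg (a + b) = mdeg a + mdeg b"
  by (simp add: mdeg_def sum.distrib)

lemma mdeg_unit_exp: "i < 4 \<Longrightarrow> mdeg (unit_exp i) = 1"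
  by (simp add: mdeg_def unit_exp_def)

lemma is_mono_mdeg_0: "is_mono a \<Longrightarrow> mdeg a = 0 \<Longrightarrow> a = 0"
  unfolding is_mono_def mdeg_def fun_eq_iff
  by (metis finite_lessThan lessThan_iff not_le sum_eq_0_iff zero_fun_apply)

lemma is_mono_mdeg_Suc:
  assumes "is_mono a" "mdeg a = Suc n"
  obtains j b where "j < 4" "is_mono b" "mdeg b = n" "a = b + unit_exp j"
proof -
  obtain j where j: "j < 4" "a j > 0"
    using assms(2) unfolding mdeg_def by (metis lessThan_iff neq0_conv nat.distinct(1) sum.neutral)
  define b where "b = a - unit_exp j"
  have a: "a = b + unit_exp j"
    using j by (auto simp: b_def unit_exp_def fun_eq_iff)
  moreover have "is_mono b"
    using assms(1) by (simp add: b_def is_mono_def)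
  moreover have "mdeg b = n"
    using arg_cong[OF a, of mdeg] assms(2) by (simp add: mdeg_add mdeg_unit_exp j)
  ultimately show ?thesis using that j by blast
qed

lemma is_mono_mdeg_1: "is_mono a \<Longrightarrow> mdeg a = 1 \<Longrightarrow> \<exists>j<4. a = unit_exp j"
  by (metis One_nat_def add_0 is_mono_mdeg_0 is_mono_mdeg_Suc)

lemma is_mono_mdeg_2:
  "is_mono a \<Longrightarrow> mdeg a = 2 \<Longrightarrow> \<exists>i<4. \<exists>j<4. a = unit_exp i + unit_exp j"
  by (metis Suc_1 is_mono_mdeg_1 is_mono_mdeg_Suc)

lemma finite_exps_below:
  assumes "is_mono a"
  shows "finite {b. b \<le> a}"
proof (rule finite_subset)
  show "{b. b \<le> a} \<subseteq> {f. \<forall>x. (x \<in> {..<4} \<longrightarrow> f x \<in> {..mdeg a}) \<and> (x \<notin> {..<4} \<longrightarrow> f x = 0)}"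
  proof clarify
    fix b :: "nat \<Rightarrow> nat" and x assume "b \<le> a"
    then have "b x \<le> a x" by (simp add: le_fun_def)
    moreover have "x < 4 \<Longrightarrow> a x \<le> mdeg a"
      unfolding mdeg_def by (rule member_le_sum) auto
    ultimately show "(x \<in> {..<4} \<longrightarrow> b x \<in> {..mdeg a}) \<and> (x \<notin> {..<4} \<longrightarrow> b x = 0)"
      using assms by (auto simp: is_mono_def)
  qed
qed (intro finite_set_of_finite_funs; simp)

lemma diff_diff_exp: "b \<le> a \<Longrightarrow> a - (a - b) = (b :: nat \<Rightarrow> nat)"
  by (simp add: le_fun_def fun_eq_iff)

lemma sum_exps_below_flip:
  fixes a :: "nat \<Rightarrow> nat"
  shows "(\<Sum>b | b \<le> a. h b) = (\<Sum>b | b \<le> a. h (a - b))"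
  by (rule sum.reindex_bij_witness[of _ "\<lambda>b. a - b" "\<lambda>b. a - b"])
    (auto simp: diff_diff_exp, auto simp: le_fun_def)

section \<open>Differential operators and products\<close>

definition monomial :: "(nat \<Rightarrow> nat) \<Rightarrow> cpoly" where
  "monomial m = (\<lambda>a. if a = m then 1 else 0)"

lemma var_eq_monomial: "var i = monomial (unit_exp i)"
  by (simp add: var_def monomial_def unit_exp_def)

lemma act_eq:
  "act g f c = (\<Sum>b | g b \<noteq> 0. g b * f (c + b) * (\<Prod>i<4. fact (c i + b i) / fact (c i)))"
  by (simp add: act_def plus_fun_def)

lemma pmult_eq: "pmult f g a = (\<Sum>b | b \<le> a. f b * g (a - b))"
  by (simp add: pmult_def le_fun_def fun_diff_def)

lemma act_monomial:
  "act (monomial m) f c = f (c + m) * (\<Prod>i<4. fact (c i + m i) / fact (c i))"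
proof -
  have "{b. monomial m b \<noteq> 0} = {m}" by (simp add: monomial_def)
  then show ?thesis by (simp add: act_eq monomial_def)
qed

lemma act_eq_sum_monomials: "act g f c = (\<Sum>m | g m \<noteq> 0. g m * act (monomial m) f c)"
  by (simp only: act_monomial) (simp add: act_eq mult.assoc)

lemma act_monomial_add: "act (monomial (m + n)) f = act (monomial m) (act (monomial n) f)"
proof
  fix c
  have "(\<Prod>i<4. fact (c i + (m i + n i)) / fact (c i)) =
      (\<Prod>i<4. fact (c i + m i + n i) / fact (c i + m i)) *
      (\<Prod>i<4. fact (c i + m i) / fact (c i) :: complex)"
    by (simp add: prod.distrib[symmetric] add.assoc)
  then show "act (monomial (m + n)) f c = act (monomial m) (act (monomial n) f) c"
    by (simp add: act_monomial add.assoc)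
qed

lemma act_var:
  assumes "i < 4"
  shows "act (var i) f c = of_nat (c i + 1) * f (c + unit_exp i)"
proof -
  have "(\<Prod>k<4. fact (c k + unit_exp i k) / fact (c k) :: complex) =
      (\<Prod>k<4. if k = i then of_nat (c i + 1) else 1)"
    by (rule prod.cong) (simp_all add: unit_exp_def fact_Suc del: of_nat_Suc)
  then show ?thesis using assms by (simp add: var_eq_monomial act_monomial prod.delta)
qed

lemma act_lincomb: "act g (\<lambda>m. a * f m + b * h m) c = a * act g f c + b * act g h c"
  by (simp add: act_eq sum_distrib_left sum.distrib algebra_simps)

lemma pmult_at_zero: "pmult f g 0 = f 0 * g 0"
proof -
  have "{b. b \<le> (0 :: nat \<Rightarrow> nat)} = {0}" by (auto simp: le_fun_def fun_eq_iff)
  then show ?thesis by (simp add: pmult_eq)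
qed

lemma pmult_monomial:
  assumes "is_mono m" "is_mono n"
  shows "pmult (monomial m) (monomial n) = monomial (m + n)"
proof
  fix a
  have summand: "monomial m b * monomial n (a - b) = (if a = m + n \<and> b = m then 1 else 0)"
    if "b \<le> a" for b
    using that by (auto simp: monomial_def le_fun_def fun_eq_iff) (metis le_add_diff_inverse)
  have "pmult (monomial m) (monomial n) a = (\<Sum>b | b \<le> a. if a = m + n \<and> b = m then 1 else 0)"
    unfolding pmult_eq by (rule sum.cong) (simp_all add: summand)
  also have "\<dots> = monomial (m + n) a"
    using finite_exps_below[OF is_mono_add[OF assms]] by (auto simp: monomial_def le_fun_def)
  finally show "pmult (monomial m) (monomial n) a = monomial (m + n) a" .
qed

lemma pmult_commute: "pmult f g a = pmult g f a"
  unfolding pmult_eq by (subst sum_exps_below_flip) (simp add: diff_diff_exp mult.commute)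

lemma pmult_act_var_left:
  assumes c: "is_mono c" and i: "i < 4"
  shows "pmult (act (var i) f) g c =
    (\<Sum>b | b \<le> c + unit_exp i. of_nat (b i) * (f b * g (c + unit_exp i - b)))"
    (is "_ = sum ?h {b. b \<le> ?c'}")
proof -
  let ?shift = "\<lambda>b. b + unit_exp i"
  have fin: "finite {b. b \<le> ?c'}"
    by (rule finite_exps_below) (simp add: is_mono_add is_mono_unit_exp c i)
  have inj: "inj_on ?shift {b. b \<le> c}"
    by (rule inj_onI) (simp add: fun_eq_iff)
  have img: "?shift ` {b. b \<le> c} \<subseteq> {b. b \<le> ?c'}"
    by (auto simp: le_fun_def add_mono)
  have "pmult (act (var i) f) g c = (\<Sum>b | b \<le> c. ?h (?shift b))"
    unfolding pmult_eq
    by (rule sum.cong) (auto simp: act_var i unit_exp_def fun_eq_iff le_fun_def mult_ac)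
  also have "\<dots> = sum ?h (?shift ` {b. b \<le> c})"
    by (simp add: sum.reindex[OF inj])
  also have "\<dots> = sum ?h {b. b \<le> ?c'}"
  proof (rule sum.mono_neutral_left[OF fin img], intro ballI)
    fix b assume b: "b \<in> {b. b \<le> ?c'} - ?shift ` {b. b \<le> c}"
    have "b i = 0"
    proof (rule ccontr)
      assume "b i \<noteq> 0"
      then have "b = ?shift (b - unit_exp i) \<and> b - unit_exp i \<le> c"
        using b by (auto simp: fun_eq_iff le_fun_def unit_exp_def split: if_splits)
      then show False using b by blast
    qed
    then show "?h b = 0" by simp
  qed
  finally show ?thesis .
qed

lemma act_var_pmult:
  assumes c: "is_mono c" and i: "i < 4"
  shows "act (var i) (pmult f g) c = pmult (act (var i) f) g c + pmult f (act (var i) g) c"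
proof -
  let ?c' = "c + unit_exp i"
  have weight_split: "of_nat (c i + 1) = (of_nat (b i) + of_nat ((?c' - b) i) :: complex)"
    if "b \<le> ?c'" for b
  proof -
    have "b i \<le> c i + 1"
      using that[unfolded le_fun_def, rule_format, of i] by (simp add: unit_exp_def)
    then have "c i + 1 = b i + (?c' - b) i" by (simp add: unit_exp_def)
    then show ?thesis by (metis of_nat_add)
  qed
  have "act (var i) (pmult f g) c =
      (\<Sum>b | b \<le> ?c'. of_nat (b i) * (f b * g (?c' - b))) +
      (\<Sum>b | b \<le> ?c'. of_nat ((?c' - b) i) * (f b * g (?c' - b)))"
    unfolding act_var[OF i] pmult_eq sum_distrib_left sum.distrib[symmetric]
    by (rule sum.cong[OF refl]) (simp only: mem_Collect_eq weight_split distrib_right)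
  also have "(\<Sum>b | b \<le> ?c'. of_nat ((?c' - b) i) * (f b * g (?c' - b))) =
      (\<Sum>b | b \<le> ?c'. of_nat (b i) * (g b * f (?c' - b)))"
    by (subst sum_exps_below_flip) (intro sum.cong refl; simp add: diff_diff_exp mult_ac)
  finally show ?thesis
    unfolding pmult_commute[of f "act (var i) g"] pmult_act_var_left[OF c i] .
qed

lemma act_var_act_var_pmult:
  assumes c: "is_mono c" and i: "i < 4" and j: "j < 4"
  shows "act (var i) (act (var j) (pmult f g)) c =
    pmult (act (var i) (act (var j) f)) g c + pmult (act (var j) f) (act (var i) g) c +
    pmult (act (var i) f) (act (var j) g) c + pmult f (act (var i) (act (var j) g)) c"
proof -
  have "act (var i) (act (var j) (pmult f g)) c =
      of_nat (c i + 1) * act (var j) (pmult f g) (c + unit_exp i)"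
    by (rule act_var[OF i])
  also have "\<dots> = of_nat (c i + 1) * pmult (act (var j) f) g (c + unit_exp i) +
      of_nat (c i + 1) * pmult f (act (var j) g) (c + unit_exp i)"
    by (simp add: act_var_pmult is_mono_add is_mono_unit_exp c i j distrib_left)
  also have "\<dots> = act (var i) (pmult (act (var j) f) g) c + act (var i) (pmult f (act (var j) g)) c"
    by (simp only: act_var[OF i])
  finally show ?thesis by (simp add: act_var_pmult c i add.assoc)
qed

section \<open>The Hessian\<close>

lemma hess_eq_second_partials:
  assumes "i < 4" "j < 4"
  shows "hess f i j = act (var i) (act (var j) f) 0"
  using assms
  by (simp add: hess_def var_eq_monomial pmult_monomial is_mono_unit_exp act_monomial_add
      zero_fun_def)

lemma hess_eq_coeff:
  assumes "i < 4" "j < 4"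
  shows "hess f i j = (if i = j then 2 else 1) * f (unit_exp i + unit_exp j)"
  using assms by (simp add: hess_eq_second_partials act_var unit_exp_def)

lemma hess_sym: "i < 4 \<Longrightarrow> j < 4 \<Longrightarrow> hess f i j = hess f j i"
  by (simp add: hess_eq_coeff add.commute)

lemma act_var_at_unit_exp:
  assumes "i < 4" "j < 4"
  shows "act (var j) f (unit_exp i) = hess f i j"
  using assms by (simp add: act_var hess_eq_coeff unit_exp_def)

lemma hess_lincomb: "hess (\<lambda>m. a * f m + b * h m) i j = a * hess f i j + b * hess h i j"
  by (simp add: hess_def act_lincomb)

lemma hess_pmult:
  assumes "i < 4" "j < 4"
  shows "hess (pmult f g) i j = hess f i j * g 0 + f (unit_exp j) * g (unit_exp i) +
    f (unit_exp i) * g (unit_exp j) + f 0 * hess g i j"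
  unfolding hess_eq_second_partials[OF assms] act_var_act_var_pmult[OF is_mono_zero assms]
    pmult_at_zero
  using assms by (simp add: act_var)

lemma is_form_coeff_eq_0: "is_form d f \<Longrightarrow> mdeg m \<noteq> d \<Longrightarrow> f m = 0"
  by (auto simp: is_form_def)

lemma is_form_var: "i < 4 \<Longrightarrow> is_form 1 (var i)"
  by (auto simp: is_form_def var_eq_monomial monomial_def is_mono_unit_exp mdeg_unit_exp)

text \<open>For e > d the action is zero, so the truncated difference d - e does no harm.\<close>

lemma is_form_act:
  assumes g: "is_form e g" and f: "is_form d f"
  shows "is_form (d - e) (act g f)"
  unfolding is_form_def
proof (intro allI impI)
  fix c assume "act g f c \<noteq> 0"
  then obtain b where "g b \<noteq> 0" "f (c + b) \<noteq> 0"
    unfolding act_eq by (auto elim: sum.not_neutral_contains_not_neutral)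
  then have "is_mono b" "mdeg b = e" "is_mono (c + b)" "mdeg (c + b) = d"
    using f g by (auto simp: is_form_def)
  then show "is_mono c \<and> mdeg c = d - e"
    by (auto simp: is_mono_def mdeg_add)
qed

lemma is_form_act_var: "is_form (Suc d) f \<Longrightarrow> i < 4 \<Longrightarrow> is_form d (act (var i) f)"
  using is_form_act[OF is_form_var] by (metis diff_Suc_1)

lemma is_form_pmult:
  assumes f: "is_form d f" and g: "is_form e g"
  shows "is_form (d + e) (pmult f g)"
  unfolding is_form_def
proof (intro allI impI)
  fix m assume "pmult f g m \<noteq> 0"
  then obtain b where b: "b \<le> m" "f b \<noteq> 0" "g (m - b) \<noteq> 0"
    unfolding pmult_eq by (auto elim: sum.not_neutral_contains_not_neutral)
  then have m: "m = b + (m - b)"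
    by (simp add: le_fun_def fun_eq_iff)
  have "is_mono b" "mdeg b = d" "is_mono (m - b)" "mdeg (m - b) = e"
    using b f g by (auto simp: is_form_def)
  then show "is_mono m \<and> mdeg m = d + e"
    by (subst (1 2) m) (simp add: is_mono_add mdeg_add)
qed

lemma is_form_lincomb:
  "is_form d f \<Longrightarrow> is_form d g \<Longrightarrow> is_form d (\<lambda>m. a * f m + b * g m)"
  unfolding is_form_def by (metis add.right_neutral mult_zero_right)

lemma linear_form_support: "is_form 1 u \<Longrightarrow> u m \<noteq> 0 \<Longrightarrow> \<exists>j<4. m = unit_exp j"
  by (auto simp: is_form_def intro: is_mono_mdeg_1)

lemma quadratic_form_support:
  "is_form 2 g \<Longrightarrow> g m \<noteq> 0 \<Longrightarrow> \<exists>i<4. \<exists>j<4. m = unit_exp i + unit_exp j"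
  by (auto simp: is_form_def intro: is_mono_mdeg_2)

lemma hess_form_eq_0:
  assumes "is_form d f" "d \<noteq> 2" "i < 4" "j < 4"
  shows "hess f i j = 0"
  using assms by (simp add: hess_eq_coeff is_form_coeff_eq_0 mdeg_add mdeg_unit_exp)

lemma hess_pmult_linear_forms:
  assumes "is_form 1 u" "is_form 1 w" "i < 4" "j < 4"
  shows "hess (pmult u w) i j = u (unit_exp i) * w (unit_exp j) + u (unit_exp j) * w (unit_exp i)"
  using assms by (simp add: hess_pmult hess_form_eq_0 is_form_coeff_eq_0)

lemma hess_pmult_constant:
  assumes "is_form 0 c" "is_form 2 g" "i < 4" "j < 4"
  shows "hess (pmult c g) i j = c 0 * hess g i j"
  using assms by (simp add: hess_pmult hess_form_eq_0 is_form_coeff_eq_0 mdeg_unit_exp)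

lemma sum_linear_form:
  assumes u: "is_form 1 u"
  shows "(\<Sum>m | u m \<noteq> 0. u m * Y m) = (\<Sum>j<4. u (unit_exp j) * Y (unit_exp j))"
proof -
  have "{m. u m \<noteq> 0} \<subseteq> unit_exp ` {..<4}"
    using linear_form_support[OF u] by blast
  then have "(\<Sum>m | u m \<noteq> 0. u m * Y m) = (\<Sum>m \<in> unit_exp ` {..<4}. u m * Y m)"
    by (intro sum.mono_neutral_left) auto
  also have "\<dots> = (\<Sum>j<4. u (unit_exp j) * Y (unit_exp j))"
    by (simp add: sum.reindex inj_on_def)
  finally show ?thesis .
qed

lemma sum_quadratic_form:
  assumes g: "is_form 2 g"
  shows "(\<Sum>m | g m \<noteq> 0. g m * Y m) =
    (\<Sum>i<4. \<Sum>j<4. hess g i j / 2 * Y (unit_exp i + unit_exp j))"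
proof -
  let ?I = "{..<4::nat} \<times> {..<4::nat}"
  let ?pair = "\<lambda>(i, j). unit_exp i + unit_exp j"
  let ?w = "\<lambda>(i, j). (if i = j then 2 else 1) / 2 :: complex"
  \<comment> \<open>x_i x_j with i, j distinct arises from (i, j) and (j, i), x_i^2 from (i, i) alone\<close>
  have fiber_weight: "(\<Sum>p \<in> {p \<in> ?I. ?pair p = unit_exp a + unit_exp b}. ?w p) = 1"
    if "a < 4" "b < 4" for a b
  proof -
    have "{p \<in> ?I. ?pair p = unit_exp a + unit_exp b} = {(a, b), (b, a)}"
      using that by (auto simp: unit_exp_pair_eq)
    then show ?thesis by (cases "a = b") auto
  qed
  have "(\<Sum>i<4. \<Sum>j<4. hess g i j / 2 * Y (unit_exp i + unit_exp j)) =
      (\<Sum>p \<in> ?I. ?w p * (g (?pair p) * Y (?pair p)))"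
    by (simp add: sum.cartesian_product hess_eq_coeff case_prod_beta mult_ac)
  also have "\<dots> = (\<Sum>m \<in> ?pair ` ?I. (\<Sum>p \<in> {p \<in> ?I. ?pair p = m}. ?w p) * (g m * Y m))"
    by (subst sum.image_gen[where g = ?pair]) (auto simp: sum_distrib_right intro!: sum.cong)
  also have "\<dots> = (\<Sum>m \<in> ?pair ` ?I. g m * Y m)"
    by (intro sum.cong refl) (auto simp: fiber_weight)
  also have "\<dots> = (\<Sum>m | g m \<noteq> 0. g m * Y m)"
  proof (intro sum.mono_neutral_right)
    show "{m. g m \<noteq> 0} \<subseteq> ?pair ` ?I"
      using quadratic_form_support[OF g] by fastforce
  qed auto
  finally show ?thesis ..
qed

lemma act_linear_form:
  "is_form 1 u \<Longrightarrow> act u f c = (\<Sum>j<4. u (unit_exp j) * act (var j) f c)"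
  unfolding act_eq_sum_monomials[of u] by (simp add: sum_linear_form var_eq_monomial)

lemma peval_linear_form:
  assumes "is_form 1 u"
  shows "peval u v = (\<Sum>j<4. u (unit_exp j) * v j)"
proof -
  have "(\<Prod>i<4. v i ^ unit_exp j i) = (\<Prod>i<4. if i = j then v j else 1)" for j
    by (rule prod.cong) (auto simp: unit_exp_def)
  then show ?thesis
    unfolding peval_def sum_linear_form[OF assms] by (simp add: prod.delta)
qed

lemma act_quadratic_form:
  "is_form 2 g \<Longrightarrow>
    act g f c = (\<Sum>i<4. \<Sum>j<4. hess g i j / 2 * act (var i) (act (var j) f) c)"
  unfolding act_eq_sum_monomials[of g]
  by (simp add: sum_quadratic_form var_eq_monomial act_monomial_add)

lemma peval_act_var_quadratic_form:
  assumes "is_form 2 g" "i < 4"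
  shows "peval (act (var i) g) v = (\<Sum>j<4. hess g j i * v j)"
proof -
  have "is_form 1 (act (var i) g)"
    using assms by (simp add: is_form_act_var numeral_2_eq_2)
  then show ?thesis
    using assms(2) by (simp add: peval_linear_form act_var_at_unit_exp)
qed

lemma act_linear_form_at_unit_exp:
  "is_form 1 l \<Longrightarrow> k < 4 \<Longrightarrow> act l r (unit_exp k) = (\<Sum>j<4. hess r k j * l (unit_exp j))"
  by (simp add: act_linear_form act_var_at_unit_exp mult.commute)

lemma quadratic_form_eqI:
  assumes f: "is_form 2 f" and g: "is_form 2 g"
    and hess_eq: "\<And>i j. i < 4 \<Longrightarrow> j < 4 \<Longrightarrow> hess f i j = hess g i j"
  shows "f = g"
proof
  fix m
  show "f m = g m"
  proof (cases "\<exists>i<4. \<exists>j<4. m = unit_exp i + unit_exp j")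
    case True
    then obtain i j where "i < 4" "j < 4" "m = unit_exp i + unit_exp j" by blast
    then show ?thesis using hess_eq[of i j] by (simp add: hess_eq_coeff split: if_splits)
  next
    case False
    then have "f m = 0" "g m = 0"
      using quadratic_form_support[OF f] quadratic_form_support[OF g] by blast+
    then show ?thesis by simp
  qed
qed

lemma hess_act_quadratic_form:
  assumes "is_form 2 g" "s < 4" "t < 4"
  shows "hess (act g f) s t =
    (\<Sum>a<4. \<Sum>b<4. hess g a b / 2 * hess (act (var a) (act (var b) f)) s t)"
  using assms by (simp add: hess_eq_coeff[of s t] act_quadratic_form sum_distrib_left mult_ac)

definition mat_mul ::
  "(nat \<Rightarrow> nat \<Rightarrow> complex) \<Rightarrow> (nat \<Rightarrow> nat \<Rightarrow> complex) \<Rightarrow> nat \<Rightarrow> nat \<Rightarrow> complex" where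
  "mat_mul A B i j = (\<Sum>k<4. A i k * B k j)"

lemma mat_mul_assoc: "mat_mul (mat_mul A B) C = mat_mul A (mat_mul B C)"
proof (intro ext)
  fix i j
  have "mat_mul (mat_mul A B) C i j = (\<Sum>k<4. \<Sum>l<4. A i l * B l k * C k j)"
    by (simp add: mat_mul_def sum_distrib_right)
  also have "\<dots> = mat_mul A (mat_mul B C) i j"
    by (subst sum.swap) (simp add: mat_mul_def sum_distrib_left mult.assoc)
  finally show "mat_mul (mat_mul A B) C i j = mat_mul A (mat_mul B C) i j" .
qed

lemma mat_mul_id_left:
  assumes "\<And>i k. i < 4 \<Longrightarrow> k < 4 \<Longrightarrow> A i k = of_bool (i = k)" "i < 4"
  shows "mat_mul A B i j = B i j"
proof -
  have "mat_mul A B i j = (\<Sum>k<4. if k = i then B k j else 0)"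
    unfolding mat_mul_def by (rule sum.cong) (auto simp: assms)
  then show ?thesis using assms(2) by simp
qed

lemma mat_mul_id_right:
  assumes "\<And>k j. k < 4 \<Longrightarrow> j < 4 \<Longrightarrow> B k j = of_bool (k = j)" "j < 4"
  shows "mat_mul A B i j = A i j"
proof -
  have "mat_mul A B i j = (\<Sum>k<4. if k = j then A i k else 0)"
    unfolding mat_mul_def by (rule sum.cong) (auto simp: assms)
  then show ?thesis using assms(2) by simp
qed

lemma mat_mul_hess_eq_id:
  assumes q: "is_form 2 q" and r: "is_form 2 r"
    and inverse: "act (act (var k) q) r = var k" and i: "i < 4" and k: "k < 4"
  shows "mat_mul (hess r) (hess q) i k = of_bool (i = k)"
proof -
  have "is_form 1 (act (var k) q)"
    using q k by (simp add: is_form_act_var numeral_2_eq_2)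
  then have "act (act (var k) q) r (unit_exp i) = mat_mul (hess r) (hess q) i k"
    using i k by (simp add: act_linear_form act_var_at_unit_exp mat_mul_def mult.commute)
  moreover have "act (act (var k) q) r (unit_exp i) = of_bool (i = k)"
    unfolding inverse by (simp add: var_eq_monomial monomial_def)
  ultimately show ?thesis by simp
qed

lemma hess_inv_quadric:
  assumes "is_form 2 q" "is_inv_quadric q r" "i < 4" "j < 4"
  shows "mat_mul (hess r) (hess q) i j = of_bool (i = j)"
    and "mat_mul (hess q) (hess r) i j = of_bool (i = j)"
proof -
  have "is_form 2 r" and "act (act (var k) q) r = var k" "act (act (var k) r) q = var k"
    if "k < 4" for k
    using assms(2) is_form_var[OF that] unfolding is_inv_quadric_def by blast+
  then show "mat_mul (hess r) (hess q) i j = of_bool (i = j)"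
    and "mat_mul (hess q) (hess r) i j = of_bool (i = j)"
    using mat_mul_hess_eq_id assms(1,3,4) by blast+
qed

lemma congruence_equation_solution:
  fixes H R G :: "nat \<Rightarrow> nat \<Rightarrow> complex"
  assumes RH: "\<And>i j. i < 4 \<Longrightarrow> j < 4 \<Longrightarrow> mat_mul R H i j = of_bool (i = j)"
    and HR: "\<And>i j. i < 4 \<Longrightarrow> j < 4 \<Longrightarrow> mat_mul H R i j = of_bool (i = j)"
    and R_sym: "\<And>i j. i < 4 \<Longrightarrow> j < 4 \<Longrightarrow> R i j = R j i"
    and eq: "\<And>i j. i < 4 \<Longrightarrow> j < 4 \<Longrightarrow>
      c * H i j + 2 * mat_mul H (mat_mul G H) i j = 2 * L i * L j"
    and st: "s < 4" "t < 4"
  shows "G s t = (\<Sum>j<4. R s j * L j) * (\<Sum>j<4. R t j * L j) - c / 2 * R s t"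
proof -
  \<comment> \<open>conjugating by R turns the equation into c R + 2 G = 2 (R L) (R L)^T\<close>
  let ?conj = "\<lambda>X. mat_mul R (mat_mul X R) s t"
  let ?lhs = "\<lambda>i j. c * H i j + 2 * mat_mul H (mat_mul G H) i j"
  have "?conj ?lhs = c * ?conj H + 2 * ?conj (mat_mul H (mat_mul G H))"
    by (simp add: mat_mul_def algebra_simps sum.distrib sum_distrib_left)
  also have "?conj H = R s t"
    using RH st by (simp add: mat_mul_assoc[symmetric] mat_mul_id_left)
  also have "?conj (mat_mul H (mat_mul G H)) =
      mat_mul (mat_mul R H) (mat_mul G (mat_mul H R)) s t"
    by (simp add: mat_mul_assoc)
  also have "\<dots> = G s t"
    using RH HR st by (simp add: mat_mul_id_left mat_mul_id_right)
  finally have lhs: "?conj ?lhs = c * R s t + 2 * G s t" .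
  have "mat_mul ?lhs R x t = mat_mul (\<lambda>i j. 2 * L i * L j) R x t" if "x < 4" for x
    unfolding mat_mul_def[where B = R] by (intro sum.cong refl) (simp add: eq that)
  then have "?conj ?lhs = ?conj (\<lambda>i j. 2 * L i * L j)"
    unfolding mat_mul_def[where A = R] by (intro sum.cong refl) simp
  also have "\<dots> = 2 * (\<Sum>j<4. R s j * L j) * (\<Sum>j<4. R t j * L j)"
    unfolding mat_mul_def sum_distrib_left sum_distrib_right
    by (subst sum.swap) (intro sum.cong refl; simp add: R_sym st mult_ac)
  finally show ?thesis using lhs by (simp add: field_simps)
qed

section \<open>Apolarity against the square of a quadric\<close>

lemma is_form_pencil:
  assumes "is_form 2 r" "is_form 1 p"
  shows "is_form 2 (\<lambda>m. a * r m + b * pmult p p m)"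
proof (rule is_form_lincomb[OF assms(1)])
  show "is_form 2 (pmult p p)"
    using is_form_pmult[OF assms(2) assms(2)] by (simp only: one_add_one)
qed

lemma hess_second_partials_square:
  assumes q: "is_form 2 q" and a: "a < 4" and b: "b < 4" and st: "s < 4" "t < 4"
  shows "hess (act (var a) (act (var b) (pmult q q))) s t =
    2 * (hess q a b * hess q s t + hess q s a * hess q t b + hess q s b * hess q t a)"
proof -
  let ?Da = "act (var a) q" and ?Db = "act (var b) q" and ?Dab = "act (var a) (act (var b) q)"
  have mono: "is_mono (unit_exp s + unit_exp t)"
    using st by (simp add: is_mono_add is_mono_unit_exp)
  have "hess (act (var a) (act (var b) (pmult q q))) s t =
      hess (pmult ?Dab q) s t + hess (pmult ?Db ?Da) s t + hess (pmult ?Da ?Db) s t +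
      hess (pmult q ?Dab) s t"
    by (simp only: hess_eq_coeff[OF st] act_var_act_var_pmult[OF mono a b] distrib_left)
  moreover have "is_form 1 ?Da" "is_form 1 ?Db" "is_form 0 ?Dab"
    using q a b by (simp_all add: is_form_act_var numeral_2_eq_2)
  moreover have "pmult q ?Dab = pmult ?Dab q"
    using pmult_commute by blast
  moreover have "?Dab 0 = hess q a b"
    using a b by (simp add: hess_eq_second_partials)
  ultimately show ?thesis
    using q a b st
    by (simp add: hess_pmult_constant hess_pmult_linear_forms act_var_at_unit_exp algebra_simps)
qed

lemma hess_act_square:
  assumes g: "is_form 2 g" and q: "is_form 2 q" and st: "s < 4" "t < 4"
  shows "hess (act g (pmult q q)) s t =
    (\<Sum>a<4. \<Sum>b<4. hess g a b * hess q a b) * hess q s t +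
    2 * mat_mul (hess q) (mat_mul (hess g) (hess q)) s t"
proof -
  let ?G = "hess g" and ?H = "hess q"
  have HGH: "mat_mul ?H (mat_mul ?G ?H) s t = (\<Sum>a<4. \<Sum>b<4. ?G a b * (?H s a * ?H t b))"
    unfolding mat_mul_def sum_distrib_left
    by (intro sum.cong refl) (simp add: hess_sym[where f = q and j = t] st mult_ac)
  have swap: "(\<Sum>a<4. \<Sum>b<4. ?G a b * (?H s b * ?H t a)) =
      (\<Sum>a<4. \<Sum>b<4. ?G a b * (?H s a * ?H t b))"
    by (subst sum.swap) (intro sum.cong refl; simp add: hess_sym[where f = g])
  have "hess (act g (pmult q q)) s t =
      (\<Sum>a<4. \<Sum>b<4. ?G a b * (?H a b * ?H s t) + ?G a b * (?H s a * ?H t b) +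
        ?G a b * (?H s b * ?H t a))"
    unfolding hess_act_quadratic_form[OF g st]
    by (intro sum.cong refl) (simp add: hess_second_partials_square q st algebra_simps)
  also have "\<dots> =
      (\<Sum>a<4. \<Sum>b<4. ?G a b * ?H a b) * ?H s t + 2 * mat_mul ?H (mat_mul ?G ?H) s t"
    by (simp add: sum.distrib swap HGH sum_distrib_right mult.assoc)
  finally show ?thesis .
qed

lemma apolar_quadric_in_pencil:
  assumes q: "is_form 2 q" and inv: "is_inv_quadric q r" and l: "is_form 1 l"
    and g: "is_form 2 g" and apolar: "act g (pmult q q) = pmult l l"
  shows "g = (\<lambda>m. - (\<Sum>a<4. \<Sum>b<4. hess g a b * hess q a b) / 2 * r m
    + 1 / 2 * pmult (act l r) (act l r) m)"
proof -
  define \<tau> where "\<tau> = (\<Sum>a<4. \<Sum>b<4. hess g a b * hess q a b)"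
  define p where "p = act l r"
  have r: "is_form 2 r"
    using inv by (simp add: is_inv_quadric_def)
  have p: "is_form 1 p"
    using is_form_act[OF l r] by (simp add: p_def)
  have hess_g: "hess g s t = p (unit_exp s) * p (unit_exp t) - \<tau> / 2 * hess r s t"
    if st: "s < 4" "t < 4" for s t
  proof -
    have "hess g s t =
        (\<Sum>j<4. hess r s j * l (unit_exp j)) * (\<Sum>j<4. hess r t j * l (unit_exp j)) -
        \<tau> / 2 * hess r s t"
    proof (rule congruence_equation_solution[OF _ _ _ _ st])
      fix i j :: nat assume ij: "i < 4" "j < 4"
      show "mat_mul (hess r) (hess q) i j = of_bool (i = j)"
        and "mat_mul (hess q) (hess r) i j = of_bool (i = j)"
        using hess_inv_quadric[OF q inv ij] by blast+
      show "hess r i j = hess r j i"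
        using hess_sym ij by blast
      show "\<tau> * hess q i j + 2 * mat_mul (hess q) (mat_mul (hess g) (hess q)) i j =
          2 * l (unit_exp i) * l (unit_exp j)"
        using hess_act_square[OF g q ij] hess_pmult_linear_forms[OF l l ij]
        by (simp add: apolar \<tau>_def mult.assoc)
    qed
    then show ?thesis
      using st by (simp add: p_def act_linear_form_at_unit_exp[OF l])
  qed
  have "g = (\<lambda>m. - \<tau> / 2 * r m + 1 / 2 * pmult p p m)"
  proof (rule quadratic_form_eqI[OF g])
    show "is_form 2 (\<lambda>m. - \<tau> / 2 * r m + 1 / 2 * pmult p p m)"
      by (rule is_form_pencil[OF r p])
    show "hess g s t = hess (\<lambda>m. - \<tau> / 2 * r m + 1 / 2 * pmult p p m) s t"
      if "s < 4" "t < 4" for s t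
      using that unfolding hess_lincomb by (simp add: hess_pmult_linear_forms[OF p p] hess_g)
  qed
  then show ?thesis
    by (simp add: \<tau>_def p_def)
qed

lemma peval_act_var_pencil:
  assumes r: "is_form 2 r" and p: "is_form 1 p" and v: "peval p v = 0" and i: "i < 4"
  shows "peval (act (var i) (\<lambda>m. a * r m + b * pmult p p m)) v = a * peval (act (var i) r) v"
proof -
  have form: "is_form 2 (\<lambda>m. a * r m + b * pmult p p m)"
    by (rule is_form_pencil[OF r p])
  have "peval (act (var i) (\<lambda>m. a * r m + b * pmult p p m)) v =
      (\<Sum>j<4. (a * hess r j i + b * (2 * p (unit_exp j) * p (unit_exp i))) * v j)"
    unfolding peval_act_var_quadratic_form[OF form i]
    by (intro sum.cong refl) (simp add: hess_lincomb hess_pmult_linear_forms[OF p p] i)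
  also have "\<dots> =
      a * (\<Sum>j<4. hess r j i * v j) + 2 * b * p (unit_exp i) * (\<Sum>j<4. p (unit_exp j) * v j)"
    by (simp add: algebra_simps sum.distrib sum_distrib_left)
  also have "\<dots> = a * peval (act (var i) r) v"
    using v by (simp add: peval_linear_form[OF p] peval_act_var_quadratic_form[OF r i])
  finally show ?thesis .
qed

theorem lemma4p8:
  fixes q r l ql :: cpoly
  assumes "is_form 2 q" and "qf_rank4 q"
    and "is_inv_quadric q r"
    and "is_form 1 l"
    and "is_form 2 ql" and "act ql (pmult q q) = pmult l l"
  shows "(\<exists>a b. ql = (\<lambda>m. a * r m + b * pmult (act l r) (act l r) m))
       \<and> (\<forall>v. peval (act l r) v = 0 \<and> peval r v = 0 \<longrightarrow>
            (\<exists>c d. (c, d) \<noteq> (0, 0) \<and>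
               (\<forall>i<4. c * peval (act (var i) ql) v + d * peval (act (var i) r) v = 0)))"
proof -
  have r: "is_form 2 r"
    using assms(3) by (simp add: is_inv_quadric_def)
  have p: "is_form 1 (act l r)"
    using is_form_act[OF assms(4) r] by simp
  obtain a b where pencil: "ql = (\<lambda>m. a * r m + b * pmult (act l r) (act l r) m)"
    using apolar_quadric_in_pencil[OF assms(1,3-6)] by blast
  have "\<exists>c d. (c, d) \<noteq> (0, 0) \<and>
      (\<forall>i<4. c * peval (act (var i) ql) v + d * peval (act (var i) r) v = 0)"
    if "peval (act l r) v = 0" for v
  proof (intro exI conjI allI impI)
    show "(1, - a) \<noteq> (0 :: complex, 0 :: complex)" by simp
    show "1 * peval (act (var i) ql) v + - a * peval (act (var i) r) v = 0" if "i < 4" for i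
      unfolding pencil using peval_act_var_pencil[OF r p \<open>peval (act l r) v = 0\<close> that] by simp
  qed
  then show ?thesis
    using pencil by blast
qed

end
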